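(* Let $M$ be a matroid on a finite set $E$ with $r(M)>0$. If $M$ is a unique expansion matroid, then its dual $M^*$ is a unique exchange matroid.
   Context: For a matroid $M=(E,\mathcal{I})$: $\mathcal{I}(M)$ its independent sets, $\mathcal{B}(M)$ its bases, $r(M)$ the size of a base. For $r(M)>0$, $s(M)=\{A\in\mathcal{I}(M): |A|=r(M)-1\}$. $M$ is a unique expansion matroid if for every $B\in\mathcal{B}(M)$ and every $A\in s(M)$, whenever $e_1,e_2\in B$ satisfy $A\cup\{e_1\}\in\mathcal{B}(M)$ and $A\cup\{e_2\}\in\mathcal{B}(M)$, then $e_1=e_2$. The dual $M^*$ is the matroid on $E$ with bases $\{E-B: B\in\mathcal{B}(M)\}$. A matroid $N$ is a unique exchange matroid if for all $B_1,B_2\in\mathcal{B}(N)$, whenever $x\in B_1-B_2$, $y_1,y_2\in B_2-B_1$, $(B_1-\{x\})\cup\{y_1\}\in\mathcal{B}(N)$ and $(B_1-\{x\})\cup\{y_2\}\in\mathcal{B}(N)$, then $y_1=y_2$. *)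

theory Defs
  imports Main
begin

definition matroid :: "'a set \<Rightarrow> 'a set set \<Rightarrow> bool" where
  "matroid E I \<longleftrightarrow> finite E \<and> I \<subseteq> Pow E \<and> {} \<in> I \<and>
     (\<forall>A B. B \<in> I \<and> A \<subseteq> B \<longrightarrow> A \<in> I) \<and>
     (\<forall>A B. A \<in> I \<and> B \<in> I \<and> card A < card B \<longrightarrow> (\<exists>e \<in> B - A. insert e A \<in> I))"

definition bases :: "'a set set \<Rightarrow> 'a set set" where
  "bases I = {B \<in> I. \<forall>X \<in> I. B \<subseteq> X \<longrightarrow> X = B}"

definition mrank :: "'a set set \<Rightarrow> nat" where
  "mrank I = card (SOME B. B \<in> bases I)"

definition s_sets :: "'a set set \<Rightarrow> 'a set set" where
  "s_sets I = {A \<in> I. card A = mrank I - 1}"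

definition unique_expansion :: "'a set set \<Rightarrow> bool" where
  "unique_expansion I \<longleftrightarrow>
     (\<forall>B \<in> bases I. \<forall>A \<in> s_sets I. \<forall>e1 e2.
        e1 \<in> B \<and> e2 \<in> B \<and> A \<union> {e1} \<in> bases I \<and> A \<union> {e2} \<in> bases I \<longrightarrow> e1 = e2)"

text \<open>Independent sets of the dual matroid M*: subsets of complements of bases
  (so that the bases of M* are exactly the sets E - B, B a base of M).\<close>
definition dual_indep :: "'a set \<Rightarrow> 'a set set \<Rightarrow> 'a set set" where
  "dual_indep E I = {X. \<exists>B \<in> bases I. X \<subseteq> E - B}"

definition unique_exchange :: "'a set set \<Rightarrow> bool" where
  "unique_exchange I \<longleftrightarrow>
     (\<forall>B1 \<in> bases I. \<forall>B2 \<in> bases I. \<forall>x y1 y2.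
        x \<in> B1 - B2 \<and> y1 \<in> B2 - B1 \<and> y2 \<in> B2 - B1 \<and>
        (B1 - {x}) \<union> {y1} \<in> bases I \<and> (B1 - {x}) \<union> {y2} \<in> bases I \<longrightarrow> y1 = y2)"

end

theory Submission
  imports Defs
begin

text \<open>
  The dual of a matroid M is a matroid whose bases are the complements E - B of the bases B
  of M. Under complementation, an exchange (E - B1) - {x} \<union> {y} in M* is the base
  (B1 - {y}) \<union> {x} of M. If two different y1, y2 \<in> B1 worked for the same x, then
  A = (B1 - {y1, y2}) \<union> {x} would be an independent set of size r(M) - 1 expanding to a base
  by two different elements y1, y2 of the base B1, contradicting unique expansion.
\<close>

lemma matroid_indep_subset_ground: "matroid E I \<Longrightarrow> X \<in> I \<Longrightarrow> X \<subseteq> E"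
  unfolding matroid_def by blast

lemma matroid_indep_finite: "matroid E I \<Longrightarrow> X \<in> I \<Longrightarrow> finite X"
  unfolding matroid_def by (meson PowD finite_subset subsetD)

lemma matroid_indep_subset: "matroid E I \<Longrightarrow> B \<in> I \<Longrightarrow> A \<subseteq> B \<Longrightarrow> A \<in> I"
  unfolding matroid_def by blast

lemma matroid_augment:
  "matroid E I \<Longrightarrow> A \<in> I \<Longrightarrow> B \<in> I \<Longrightarrow> card A < card B \<Longrightarrow> \<exists>e\<in>B - A. insert e A \<in> I"
  unfolding matroid_def by blast

lemma matroid_finite_indeps: "matroid E I \<Longrightarrow> finite I"
  unfolding matroid_def by (meson finite_Pow_iff finite_subset)

lemma base_indep: "B \<in> bases I \<Longrightarrow> B \<in> I"
  unfolding bases_def by blast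

lemma base_maximal: "B \<in> bases I \<Longrightarrow> X \<in> I \<Longrightarrow> B \<subseteq> X \<Longrightarrow> X = B"
  unfolding bases_def by blast

lemma card_indep_le_base:
  assumes m: "matroid E I" and B: "B \<in> bases I" and X: "X \<in> I"
  shows "card X \<le> card B"
proof (rule ccontr)
  assume "\<not> card X \<le> card B"
  then obtain e where "e \<in> X - B" "insert e B \<in> I"
    using matroid_augment[OF m base_indep[OF B] X] by auto
  then show False using base_maximal[OF B] by blast
qed

lemma bases_card_eq:
  "matroid E I \<Longrightarrow> B\<^sub>1 \<in> bases I \<Longrightarrow> B\<^sub>2 \<in> bases I \<Longrightarrow> card B\<^sub>1 = card B\<^sub>2"
  by (meson base_indep card_indep_le_base le_antisym)

lemma indep_card_base_is_base:
  assumes m: "matroid E I" and B: "B \<in> bases I" and X: "X \<in> I" and c: "card X = card B"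
  shows "X \<in> bases I"
  unfolding bases_def
proof (intro CollectI conjI ballI impI)
  fix Y assume Y: "Y \<in> I" "X \<subseteq> Y"
  then show "Y = X"
    using card_indep_le_base[OF m B Y(1)] c matroid_indep_finite[OF m Y(1)]
    by (metis card_seteq)
qed (fact X)

lemma ex_base:
  assumes m: "matroid E I" shows "\<exists>B. B \<in> bases I"
proof -
  have "{} \<in> I" using m unfolding matroid_def by blast
  then obtain B where "B \<in> I" "\<And>X. X \<in> I \<Longrightarrow> B \<subseteq> X \<Longrightarrow> X = B"
    using finite_has_maximal2[OF matroid_finite_indeps[OF m]] by metis
  then show ?thesis unfolding bases_def by blast
qed

lemma mrank_eq_card_base: "matroid E I \<Longrightarrow> B \<in> bases I \<Longrightarrow> mrank I = card B"
  unfolding mrank_def by (metis bases_card_eq ex_base someI_ex)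

lemma ex_base_between:
  assumes m: "matroid E I" and J: "J \<in> I" "J \<subseteq> S" and B\<^sub>0: "B\<^sub>0 \<in> bases I" "B\<^sub>0 \<subseteq> S"
  shows "\<exists>B. B \<in> bases I \<and> J \<subseteq> B \<and> B \<subseteq> S"
proof -
  define F where "F = {X \<in> I. J \<subseteq> X \<and> X \<subseteq> S}"
  have "finite F" unfolding F_def using matroid_finite_indeps[OF m] by simp
  moreover have "J \<in> F" using J unfolding F_def by simp
  ultimately obtain B where B: "B \<in> F" and max: "\<And>X. X \<in> F \<Longrightarrow> B \<subseteq> X \<Longrightarrow> X = B"
    using finite_has_maximal2 by metis
  have BI: "B \<in> I" and "J \<subseteq> B" "B \<subseteq> S" using B unfolding F_def by auto
  have "card B = card B\<^sub>0"
  proof (rule ccontr)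
    assume "card B \<noteq> card B\<^sub>0"
    then have "card B < card B\<^sub>0" using card_indep_le_base[OF m B\<^sub>0(1) BI] by simp
    then obtain e where e: "e \<in> B\<^sub>0 - B" "insert e B \<in> I"
      using matroid_augment[OF m BI base_indep[OF B\<^sub>0(1)]] by blast
    then have "insert e B \<in> F" unfolding F_def using \<open>J \<subseteq> B\<close> \<open>B \<subseteq> S\<close> B\<^sub>0(2) by blast
    then show False using max e by blast
  qed
  then show ?thesis
    using indep_card_base_is_base[OF m B\<^sub>0(1) BI] \<open>J \<subseteq> B\<close> \<open>B \<subseteq> S\<close> by blast
qed

lemma dual_indep_augment:
  assumes m: "matroid E I" and X: "X \<in> dual_indep E I" and Y: "Y \<in> dual_indep E I"
    and XY: "card X < card Y"
  shows "\<exists>e \<in> Y - X. insert e X \<in> dual_indep E I"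
proof -
  obtain B\<^sub>X where B\<^sub>X: "B\<^sub>X \<in> bases I" "X \<subseteq> E - B\<^sub>X" using X unfolding dual_indep_def by blast
  obtain B\<^sub>Y where B\<^sub>Y: "B\<^sub>Y \<in> bases I" "Y \<subseteq> E - B\<^sub>Y" using Y unfolding dual_indep_def by blast
  have B\<^sub>YI: "B\<^sub>Y \<in> I" using base_indep[OF B\<^sub>Y(1)] .
  have "B\<^sub>X \<subseteq> E - X" using B\<^sub>X matroid_indep_subset_ground[OF m base_indep] by blast
  then obtain B where B: "B \<in> bases I" "B\<^sub>Y - X \<subseteq> B" "B \<subseteq> E - X"
    using ex_base_between[OF m matroid_indep_subset[OF m B\<^sub>YI], of "B\<^sub>Y - X" "E - X" B\<^sub>X]
      B\<^sub>X(1) matroid_indep_subset_ground[OF m B\<^sub>YI] by blast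
  have fin: "finite X" "finite Y" "finite B\<^sub>Y" "finite B"
    using matroid_indep_finite[OF m] base_indep B B\<^sub>YI finite_subset[OF B\<^sub>X(2)] finite_subset[OF B\<^sub>Y(2)]
      m unfolding matroid_def by auto
  \<comment> \<open>Besides BY - X, the base B has only |BY \<inter> X| further elements, and BY \<inter> X \<subseteq> X - Y.\<close>
  have "card (B \<inter> (Y - X)) \<le> card (B - (B\<^sub>Y - X))"
    using B\<^sub>Y(2) fin by (intro card_mono) auto
  also have "\<dots> = card B\<^sub>Y - card (B\<^sub>Y - X)"
    using B(2) fin bases_card_eq[OF m B(1) B\<^sub>Y(1)] by (simp add: card_Diff_subset)
  also have "\<dots> = card (B\<^sub>Y \<inter> X)"
    using card_Int_Diff[OF fin(3), of X] by simp
  also have "\<dots> \<le> card (X - Y)"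
    using B\<^sub>Y fin by (intro card_mono) auto
  also have "\<dots> < card (Y - X)"
    using XY card_Int_Diff[OF fin(1), of Y] card_Int_Diff[OF fin(2), of X] by (simp add: Int_commute)
  finally have "\<not> Y - X \<subseteq> B"
    by (metis Int_absorb1 less_irrefl)
  then obtain e where e: "e \<in> Y - X" "e \<notin> B" by blast
  have "insert e X \<subseteq> E - B" using e B B\<^sub>X(2) B\<^sub>Y(2) by blast
  then show ?thesis using e B(1) unfolding dual_indep_def by blast
qed

lemma matroid_dual:
  assumes m: "matroid E I"
  shows "matroid E (dual_indep E I)"
  unfolding matroid_def
proof (intro conjI allI impI)
  show "finite E" using m unfolding matroid_def by simp
  show "dual_indep E I \<subseteq> Pow E" unfolding dual_indep_def by blast
  show "{} \<in> dual_indep E I" using ex_base[OF m] unfolding dual_indep_def by blast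
  show "A \<in> dual_indep E I" if "B \<in> dual_indep E I \<and> A \<subseteq> B" for A B
    using that unfolding dual_indep_def by blast
  show "\<exists>e\<in>B - A. insert e A \<in> dual_indep E I"
    if "A \<in> dual_indep E I \<and> B \<in> dual_indep E I \<and> card A < card B" for A B
    using that dual_indep_augment[OF m] by blast
qed

lemma bases_dual:
  assumes m: "matroid E I"
  shows "bases (dual_indep E I) = (\<lambda>B. E - B) ` bases I"
proof (intro equalityI subsetI)
  fix X assume X: "X \<in> bases (dual_indep E I)"
  then obtain B where B: "B \<in> bases I" "X \<subseteq> E - B" unfolding bases_def dual_indep_def by blast
  then have "E - B = X" using X unfolding bases_def dual_indep_def by blast
  then show "X \<in> (\<lambda>B. E - B) ` bases I" using B by blast
next
  fix X assume "X \<in> (\<lambda>B. E - B) ` bases I"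
  then obtain B where B: "B \<in> bases I" "X = E - B" by blast
  have "Y = X" if Y: "Y \<in> dual_indep E I" "X \<subseteq> Y" for Y
  proof -
    obtain B' where B': "B' \<in> bases I" "Y \<subseteq> E - B'" using Y(1) unfolding dual_indep_def by blast
    have "B' \<subseteq> B"
      using B B' Y(2) matroid_indep_subset_ground[OF m base_indep] by blast
    then have "B' = B" using base_maximal[OF B'(1) base_indep[OF B(1)]] by simp
    then show ?thesis using B B' Y(2) by blast
  qed
  moreover have "X \<in> dual_indep E I" using B unfolding dual_indep_def by blast
  ultimately show "X \<in> bases (dual_indep E I)" unfolding bases_def by blast
qed

lemma unique_expansionD:
  "unique_expansion I \<Longrightarrow> B \<in> bases I \<Longrightarrow> A \<in> s_sets I \<Longrightarrow> e\<^sub>1 \<in> B \<Longrightarrow> e\<^sub>2 \<in> B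
    \<Longrightarrow> A \<union> {e\<^sub>1} \<in> bases I \<Longrightarrow> A \<union> {e\<^sub>2} \<in> bases I \<Longrightarrow> e\<^sub>1 = e\<^sub>2"
  unfolding unique_expansion_def by blast

lemma unique_expansion_exchange:
  assumes m: "matroid E I" and ue: "unique_expansion I" and B: "B \<in> bases I"
    and x: "x \<notin> B" and y: "y\<^sub>1 \<in> B" "y\<^sub>2 \<in> B"
    and D: "insert x (B - {y\<^sub>1}) \<in> bases I" "insert x (B - {y\<^sub>2}) \<in> bases I"
  shows "y\<^sub>1 = y\<^sub>2"
proof (rule ccontr)
  assume ne: "y\<^sub>1 \<noteq> y\<^sub>2"
  define A where "A = insert x (B - {y\<^sub>1, y\<^sub>2})"
  have "A \<in> I"
    by (rule matroid_indep_subset[OF m base_indep[OF D(1)]]) (auto simp: A_def)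
  moreover have "card A = mrank I - 1"
  proof -
    have fin: "finite B" using matroid_indep_finite[OF m base_indep[OF B]] .
    have "card {y\<^sub>1, y\<^sub>2} = 2" using ne by simp
    moreover have "card {y\<^sub>1, y\<^sub>2} \<le> card B" using fin y by (intro card_mono) auto
    moreover have "card (B - {y\<^sub>1, y\<^sub>2}) = card B - card {y\<^sub>1, y\<^sub>2}"
      using fin y by (intro card_Diff_subset) auto
    moreover have "card A = Suc (card (B - {y\<^sub>1, y\<^sub>2}))"
      unfolding A_def using fin x by simp
    ultimately show ?thesis using mrank_eq_card_base[OF m B] by linarith
  qed
  ultimately have A: "A \<in> s_sets I" unfolding s_sets_def by simp
  have "A \<union> {y\<^sub>2} = insert x (B - {y\<^sub>1})" "A \<union> {y\<^sub>1} = insert x (B - {y\<^sub>2})"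
    unfolding A_def using ne x y by auto
  then have "y\<^sub>2 = y\<^sub>1"
    using unique_expansionD[OF ue B A y(2) y(1)] D by argo
  with ne show False by simp
qed

lemma bases_dual_exchange_iff:
  assumes m: "matroid E I" and B: "B \<in> bases I" and x: "x \<in> E - B" and y: "y \<in> B"
  shows "(E - B) - {x} \<union> {y} \<in> bases (dual_indep E I) \<longleftrightarrow> insert x (B - {y}) \<in> bases I"
proof -
  have ground: "bases I \<subseteq> Pow E"
    using matroid_indep_subset_ground[OF m base_indep] by blast
  have "inj_on ((-) E) (Pow E)" by (rule inj_onI) blast
  moreover have "(E - B) - {x} \<union> {y} = E - insert x (B - {y})"
    using B x y ground by blast
  moreover have "insert x (B - {y}) \<in> Pow E" using B x ground by blast
  ultimately show ?thesis
    unfolding bases_dual[OF m] using ground by (simp add: inj_on_image_mem_iff)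
qed

theorem theorem11:
  fixes E :: "'a set" and I :: "'a set set"
  assumes "matroid E I"
    and "mrank I > 0"
    and "unique_expansion I"
  shows "matroid E (dual_indep E I) \<and> unique_exchange (dual_indep E I)"
proof
  note m = assms(1)
  show "matroid E (dual_indep E I)" using matroid_dual[OF m] .
  show "unique_exchange (dual_indep E I)"
    unfolding unique_exchange_def
  proof (intro ballI allI impI, elim conjE)
    fix C\<^sub>1 C\<^sub>2 x y\<^sub>1 y\<^sub>2
    assume C: "C\<^sub>1 \<in> bases (dual_indep E I)" "C\<^sub>2 \<in> bases (dual_indep E I)"
      and x: "x \<in> C\<^sub>1 - C\<^sub>2" and y: "y\<^sub>1 \<in> C\<^sub>2 - C\<^sub>1" "y\<^sub>2 \<in> C\<^sub>2 - C\<^sub>1"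
      and D: "C\<^sub>1 - {x} \<union> {y\<^sub>1} \<in> bases (dual_indep E I)" "C\<^sub>1 - {x} \<union> {y\<^sub>2} \<in> bases (dual_indep E I)"
    obtain B where B: "B \<in> bases I" "C\<^sub>1 = E - B" using C(1) bases_dual[OF m] by auto
    have "C\<^sub>2 \<subseteq> E" using C(2) bases_dual[OF m] by auto
    then have x': "x \<in> E - B" and y': "y\<^sub>1 \<in> B" "y\<^sub>2 \<in> B" using x y B(2) by auto
    have "insert x (B - {y\<^sub>1}) \<in> bases I" "insert x (B - {y\<^sub>2}) \<in> bases I"
      using D bases_dual_exchange_iff[OF m B(1) x'] y' unfolding B(2) by auto
    then show "y\<^sub>1 = y\<^sub>2"
      using unique_expansion_exchange[OF m assms(3) B(1) _ y'] x' by blast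
  qed
qed

end
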